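(* Let $P^0\in L\cap\Delta^{n-1}_+$ satisfy $\bigl(P^0+\mathbf{Q}(P^0,P^* )\bigr)\cap L=\{P^0\}$. Then there exists a strictly convex function $h$ on $(0,\infty)$ such that $P^0$ minimizes the $f$-divergence $H_h(P\|P^* )=\sum_i p^*_i\,h(p_i/p^*_i)$ over $L\cap\Delta^{n-1}_+$. Conversely, if $P^0\in L\cap\Delta^{n-1}_+$ is a minimizer over $L\cap\Delta^{n-1}_+$ of $H_h(\cdot\|P^* )$ for some strictly convex differentiable $h$ on $(0,\infty)$, then $\bigl(P^0+\mathbf{Q}(P^0,P^* )\bigr)\cap L=\{P^0\}$.
   Context: Fix $n\ge 2$ and a positive equilibrium distribution $P^*=(p^*_i)$, $p^*_i>0$, $\sum_i p^*_i=1$. Let $\Delta^{n-1}_+=\{P\in\mathbb{R}^n: p_i>0,\ \sum_i p_i=1\}$. For $i\neq j$ let $\gamma^{ji}\in\mathbb{R}^n$ be the vector with $\gamma^{ji}_j=-1$, $\gamma^{ji}_i=1$, other coordinates $0$; ${\rm cone}$ denotes the set of non-negative linear combinations; ${\rm sign}$ is the three-valued sign function; $$\mathbf{Q}(P,P^* )={\rm cone}\Bigl\{\gamma^{ji}\,{\rm sign}\Bigl(\tfrac{p_j}{p^*_j}-\tfrac{p_i}{p^*_i}\Bigr)\ :\ 1\le j<i\le n\Bigr\}.$$ The condition manifold is $L=\{P\in\mathbb{R}^n:\ \sum_j m_{rj}p_j=M_r,\ r=0,\dots,k\}$ for a real $(k+1)\times n$ matrix $(m_{rj})$ with $m_{0j}=1$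 for all $j$, $M_0=1$; assume $L\cap\Delta^{n-1}_+\neq\emptyset$. *)

theory Defs
  imports "HOL-Analysis.Analysis"
begin

text \<open>Vectors in R^n are represented as functions nat => real, with coordinates
  indexed by 0..n-1 (the paper's 1..n shifted by one).\<close>

definition strict_convex_on :: "real set \<Rightarrow> (real \<Rightarrow> real) \<Rightarrow> bool" where
  "strict_convex_on S f \<longleftrightarrow> convex S \<and>
     (\<forall>x\<in>S. \<forall>y\<in>S. \<forall>t. x \<noteq> y \<and> 0 < t \<and> t < 1 \<longrightarrow>
        f ((1 - t) * x + t * y) < (1 - t) * f x + t * f y)"

definition pos_simplex :: "nat \<Rightarrow> (nat \<Rightarrow> real) set" where
  "pos_simplex n = {P. (\<forall>i<n. P i > 0) \<and> (\<forall>i\<ge>n. P i = 0) \<and> (\<Sum>i<n. P i) = 1}"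

definition cond_manifold :: "nat \<Rightarrow> nat \<Rightarrow> (nat \<Rightarrow> nat \<Rightarrow> real) \<Rightarrow> (nat \<Rightarrow> real) \<Rightarrow> (nat \<Rightarrow> real) set" where
  "cond_manifold n k m M = {P. (\<forall>i\<ge>n. P i = 0) \<and> (\<forall>r\<le>k. (\<Sum>j<n. m r j * P j) = M r)}"

definition gamma :: "nat \<Rightarrow> nat \<Rightarrow> nat \<Rightarrow> real" where
  "gamma j i = (\<lambda>l. if l = j then -1 else if l = i then 1 else 0)"

definition Q_gens :: "nat \<Rightarrow> (nat \<Rightarrow> real) \<Rightarrow> (nat \<Rightarrow> real) \<Rightarrow> (nat \<Rightarrow> real) set" where
  "Q_gens n P Pstar = {(\<lambda>l. sgn (P j / Pstar j - P i / Pstar i) * gamma j i l) | j i. j < i \<and> i < n}"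

definition nonneg_cone :: "(nat \<Rightarrow> real) set \<Rightarrow> (nat \<Rightarrow> real) set" where
  "nonneg_cone S = {x. \<exists>F c. finite F \<and> F \<subseteq> S \<and> (\<forall>v\<in>F. c v \<ge> 0) \<and>
                        x = (\<lambda>l. \<Sum>v\<in>F. c v * v l)}"

definition Qcone :: "nat \<Rightarrow> (nat \<Rightarrow> real) \<Rightarrow> (nat \<Rightarrow> real) \<Rightarrow> (nat \<Rightarrow> real) set" where
  "Qcone n P Pstar = nonneg_cone (Q_gens n P Pstar)"

definition fdiv :: "nat \<Rightarrow> (real \<Rightarrow> real) \<Rightarrow> (nat \<Rightarrow> real) \<Rightarrow> (nat \<Rightarrow> real) \<Rightarrow> real" where
  "fdiv n h P Pstar = (\<Sum>i<n. Pstar i * h (P i / Pstar i))"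

end

theory Submission
  imports Defs
begin

text \<open>
  Characterisation of f-divergence minimizers by the cone Q(P0, P*).  Write x i = P0 i / P*i.

  Sufficiency.  If (P0 + Q(P0, P*)) meets L only in P0, then no convex combination of the
  column differences m(., i) - m(., j), taken over pairs with x i < x j, vanishes: it would give
  a nonzero cone direction (a transfer of mass towards smaller ratios) staying in L.  Gordan's
  theorem of the alternative then yields a multiplier y whose row combination
  g i = sum_r y r * m r i is strictly increasing in x.  A strictly convex h with subgradient g i
  at x i exists (convex interpolation of monotone slope data plus a small multiple of the
  square), and the supporting-line bound gives H_h(P) >= H_h(P0) + sum_i g i (P i - P0 i) = H_h(P0)
  for all P in L.

  Necessity.  For strictly convex differentiable h the derivative D i = h'(x i) is strictly
  increasing in x, so every nonzero q in the cone has negative pairing with D; if P0 + q were in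
  L, the divergence would strictly decrease along a feasible segment from P0.
\<close>

lemma positive_weight:
  fixes c :: "'a \<Rightarrow> real"
  assumes "sum c A = 1"
  obtains a where "a \<in> A" "0 < c a"
proof (rule ccontr)
  assume "\<not> thesis"
  then have "\<forall>a\<in>A. c a \<le> 0" using that by force
  then have "sum c A \<le> 0" by (simp add: sum_nonpos)
  then show False using assms by simp
qed

lemma convex_comb_neg:
  fixes c f :: "'a \<Rightarrow> real"
  assumes "finite A" "\<forall>a\<in>A. 0 \<le> c a" "sum c A = 1" "\<forall>a\<in>A. f a < 0"
  shows "(\<Sum>a\<in>A. c a * f a) < 0"
proof -
  obtain a0 where a0: "a0 \<in> A" "0 < c a0" using positive_weight[OF assms(3)] .
  have "(\<Sum>a\<in>A. c a * f a) < (\<Sum>a\<in>A. 0)"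
  proof (rule sum_strict_mono_ex1[OF assms(1)])
    show "\<forall>a\<in>A. c a * f a \<le> 0" using assms(2,4) by (meson less_imp_le mult_nonneg_nonpos)
    show "\<exists>a\<in>A. c a * f a < 0" using a0 assms(4) by (meson mult_pos_neg)
  qed
  then show ?thesis by simp
qed

lemma finite_separation:
  fixes Lo Up :: "real set"
  assumes "finite Lo" "finite Up" and below: "\<forall>l\<in>Lo. \<forall>u\<in>Up. l < u"
  shows "\<exists>t. (\<forall>l\<in>Lo. l < t) \<and> (\<forall>u\<in>Up. t < u)"
proof (cases "Lo = {}")
  case True
  show ?thesis
  proof (intro exI conjI ballI)
    fix u assume "u \<in> Up"
    then have "Min (insert 0 Up) \<le> u" using assms(2) by simp
    then show "Min (insert 0 Up) - 1 < u" by simp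
  qed (use True in simp)
next
  case Lo: False
  show ?thesis
  proof (cases "Up = {}")
    case True
    have "l \<le> Max Lo" if "l \<in> Lo" for l using that assms(1) by simp
    then show ?thesis using True by (intro exI[of _ "Max Lo + 1"]) force
  next
    case False
    have "Max Lo < Min Up" using below Lo False assms(1,2) by auto
    moreover have "l \<le> Max Lo" if "l \<in> Lo" for l using that assms(1) by simp
    moreover have "Min Up \<le> u" if "u \<in> Up" for u using that assms(2) by simp
    ultimately show ?thesis
      by (intro exI[of _ "(Max Lo + Min Up) / 2"]) force
  qed
qed

subsection \<open>Gordan's theorem of the alternative\<close>

text \<open>Fourier--Motzkin elimination of coordinate d: keep the vectors vanishing at d and add, for
  every pair p, q with p d > 0 > q d, the positive combination of p and q vanishing at d.\<close>

definition fm_elim :: "nat \<Rightarrow> (nat \<Rightarrow> real) set \<Rightarrow> (nat \<Rightarrow> real) set" where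
  "fm_elim d A = {a \<in> A. a d = 0} \<union>
     {(\<lambda>r. (- q d) * p r + p d * q r) | p q. p \<in> {p \<in> A. 0 < p d} \<and> q \<in> {q \<in> A. q d < 0}}"

lemma finite_fm_elim: "finite A \<Longrightarrow> finite (fm_elim d A)"
  unfolding fm_elim_def by (intro finite_UnI finite_image_set2) auto

lemma fm_elim_vanishes: "b \<in> fm_elim d A \<Longrightarrow> b d = 0"
  unfolding fm_elim_def by auto

lemma fm_elim_positive_comb:
  assumes "finite A" and "b \<in> fm_elim d A"
  shows "\<exists>w. (\<forall>a\<in>A. 0 \<le> w a) \<and> 0 < sum w A \<and> (\<forall>r. (\<Sum>a\<in>A. w a * a r) = b r)"
proof -
  from assms(2) consider "b \<in> A" "b d = 0"
    | p q where "b = (\<lambda>r. (- q d) * p r + p d * q r)" "p \<in> A" "0 < p d" "q \<in> A" "q d < 0"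
    unfolding fm_elim_def by blast
  then show ?thesis
  proof cases
    case 1
    then show ?thesis
      by (intro exI[of _ "\<lambda>a. if a = b then 1 else 0"])
        (simp add: assms(1) if_distrib[of "\<lambda>c. c * _"] cong: if_cong)
  next
    case (2 p q)
    note b = 2(1) and p = 2(2,3) and q = 2(4,5)
    define w where "w a = (if a = p then - q d else 0) + (if a = q then p d else 0)" for a
    have "(\<Sum>a\<in>A. w a * a r) = b r" for r
    proof -
      have "(\<Sum>a\<in>A. w a * a r)
          = (\<Sum>a\<in>A. (if a = p then - q d * p r else 0) + (if a = q then p d * q r else 0))"
        by (intro sum.cong) (auto simp: w_def)
      also have "\<dots> = b r" using p q assms(1) by (simp add: b sum.distrib)
      finally show ?thesis .
    qed
    moreover have "sum w A = - q d + p d"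
      using p q assms(1) by (simp add: w_def sum.distrib)
    ultimately show ?thesis using p q by (intro exI[of _ w]) (auto simp: w_def)
  qed
qed

lemma zero_comb_lift:
  fixes A B :: "(nat \<Rightarrow> real) set"
  assumes fin: "finite A" "finite B"
    and cone: "\<forall>b\<in>B. \<exists>w. (\<forall>a\<in>A. 0 \<le> w a) \<and> 0 < sum w A \<and> (\<forall>r. (\<Sum>a\<in>A. w a * a r) = b r)"
    and c: "\<forall>b\<in>B. 0 \<le> c b" "sum c B = 1" "\<forall>r\<in>R. (\<Sum>b\<in>B. c b * b r) = 0"
  shows "\<exists>c'. (\<forall>a\<in>A. 0 \<le> c' a) \<and> sum c' A = 1 \<and> (\<forall>r\<in>R. (\<Sum>a\<in>A. c' a * a r) = 0)"
proof -
  from cone obtain W where W: "\<And>b. b \<in> B \<Longrightarrow>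
      (\<forall>a\<in>A. 0 \<le> W b a) \<and> 0 < sum (W b) A \<and> (\<forall>r. (\<Sum>a\<in>A. W b a * a r) = b r)"
    by metis
  define T where "T = (\<Sum>b\<in>B. c b * sum (W b) A)"
  obtain b0 where b0: "b0 \<in> B" "0 < c b0" using positive_weight[OF c(2)] .
  have "0 < T" unfolding T_def
    using b0 c(1) W by (intro sum_pos2[OF fin(2) b0(1)]) (auto intro: mult_nonneg_nonneg less_imp_le)
  define c' where "c' a = (\<Sum>b\<in>B. c b * W b a) / T" for a
  have "\<forall>a\<in>A. 0 \<le> c' a"
    unfolding c'_def using \<open>0 < T\<close> c(1) W by (auto intro!: divide_nonneg_pos sum_nonneg)
  moreover have "sum c' A = 1"
  proof -
    have "sum c' A = (\<Sum>b\<in>B. \<Sum>a\<in>A. c b * W b a) / T"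
      unfolding c'_def by (simp add: sum_divide_distrib sum.swap[of _ A])
    also have "\<dots> = 1" using \<open>0 < T\<close> by (simp add: T_def sum_distrib_left)
    finally show ?thesis .
  qed
  moreover have "(\<Sum>a\<in>A. c' a * a r) = 0" if "r \<in> R" for r
  proof -
    have "(\<Sum>a\<in>A. c' a * a r) = (\<Sum>b\<in>B. c b * (\<Sum>a\<in>A. W b a * a r)) / T"
      unfolding c'_def
      by (simp add: sum_divide_distrib sum_distrib_left sum_distrib_right sum.swap[of _ A] mult.assoc)
    also have "\<dots> = 0" using c(3) that W by simp
    finally show ?thesis .
  qed
  ultimately show ?thesis by blast
qed

lemma fm_elim_bounds_ordered:
  assumes y': "\<forall>b\<in>fm_elim d A. (\<Sum>r<d. b r * y' r) < 0"
    and p: "p \<in> A" "0 < p d" and q: "q \<in> A" "q d < 0"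
  shows "- (\<Sum>r<d. q r * y' r) / q d < - (\<Sum>r<d. p r * y' r) / p d"
proof -
  define Sp Sq where "Sp = (\<Sum>r<d. p r * y' r)" and "Sq = (\<Sum>r<d. q r * y' r)"
  have "(\<lambda>r. (- q d) * p r + p d * q r) \<in> fm_elim d A"
    unfolding fm_elim_def using p q by blast
  from bspec[OF y' this] have "(\<Sum>r<d. ((- q d) * p r + p d * q r) * y' r) < 0" by simp
  also have "(\<Sum>r<d. ((- q d) * p r + p d * q r) * y' r)
      = (\<Sum>r<d. (- q d) * (p r * y' r) + p d * (q r * y' r))"
    by (simp add: algebra_simps)
  also have "\<dots> = - q d * Sp + p d * Sq"
    unfolding Sp_def Sq_def sum.distrib sum_distrib_left ..
  finally have "- q d * Sp + p d * Sq < 0" .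
  then show ?thesis
    using p(2) q(2) unfolding Sp_def[symmetric] Sq_def[symmetric] by (simp add: field_simps)
qed

text \<open>A strict solution of the eliminated system extends to the original system by choosing the
  value of coordinate d between these bounds.\<close>

lemma fm_elim_lift_solution:
  assumes fin: "finite A" and y': "\<forall>b\<in>fm_elim d A. (\<Sum>r<d. b r * y' r) < 0"
  shows "\<exists>y. \<forall>a\<in>A. (\<Sum>r<Suc d. a r * y r) < 0"
proof -
  define S where "S a = (\<Sum>r<d. a r * y' r)" for a :: "nat \<Rightarrow> real"
  define Lo where "Lo = (\<lambda>q. - S q / q d) ` {q \<in> A. q d < 0}"
  define Up where "Up = (\<lambda>p. - S p / p d) ` {p \<in> A. 0 < p d}"
  have "\<forall>l\<in>Lo. \<forall>u\<in>Up. l < u"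
    using fm_elim_bounds_ordered[OF y'] unfolding Lo_def Up_def S_def by blast
  moreover have "finite Lo" "finite Up" using fin by (simp_all add: Lo_def Up_def)
  ultimately obtain t where t: "\<forall>l\<in>Lo. l < t" "\<forall>u\<in>Up. t < u"
    using finite_separation[of Lo Up] by blast
  define y where "y = y'(d := t)"
  have y_sum: "(\<Sum>r<Suc d. a r * y r) = S a + a d * t" for a
  proof -
    have "(\<Sum>r<d. a r * y r) = S a" unfolding S_def y_def by (intro sum.cong) auto
    then show ?thesis by (simp add: y_def)
  qed
  have "(\<Sum>r<Suc d. a r * y r) < 0" if a: "a \<in> A" for a
  proof (cases "a d" "0::real" rule: linorder_cases)
    case less
    then have "- S a / a d < t" using t(1) a unfolding Lo_def by blast
    then have "t * a d < - S a" using less by (simp add: field_simps)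
    then show ?thesis unfolding y_sum by (simp add: algebra_simps)
  next
    case equal
    then have "a \<in> fm_elim d A" using a unfolding fm_elim_def by blast
    then have "S a < 0" using y' by (simp add: S_def)
    then show ?thesis unfolding y_sum using equal by simp
  next
    case greater
    then have "t < - S a / a d" using t(2) a unfolding Up_def by blast
    then have "t * a d < - S a" using greater by (simp add: field_simps)
    then show ?thesis unfolding y_sum by (simp add: algebra_simps)
  qed
  then show ?thesis by blast
qed

lemma gordan_alternative:
  fixes A :: "(nat \<Rightarrow> real) set"
  assumes "finite A"
  shows "(\<exists>y. \<forall>a\<in>A. (\<Sum>r<d. a r * y r) < 0) \<or>
         (\<exists>c. (\<forall>a\<in>A. 0 \<le> c a) \<and> sum c A = 1 \<and> (\<forall>r<d. (\<Sum>a\<in>A. c a * a r) = 0))"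
  using assms
proof (induction d arbitrary: A)
  case 0
  show ?case
  proof (cases "A = {}")
    case False
    then obtain a0 where "a0 \<in> A" by auto
    then show ?thesis using 0 by (intro disjI2 exI[of _ "\<lambda>a. if a = a0 then 1 else 0"]) auto
  qed simp
next
  case (Suc d)
  from Suc.IH[OF finite_fm_elim[OF Suc.prems]] show ?case
  proof
    assume "\<exists>y. \<forall>b\<in>fm_elim d A. (\<Sum>r<d. b r * y r) < 0"
    then show ?case using fm_elim_lift_solution[OF Suc.prems] by blast
  next
    assume "\<exists>c. (\<forall>b\<in>fm_elim d A. 0 \<le> c b) \<and> sum c (fm_elim d A) = 1 \<and>
                (\<forall>r<d. (\<Sum>b\<in>fm_elim d A. c b * b r) = 0)"
    then obtain c where c: "\<forall>b\<in>fm_elim d A. 0 \<le> c b" "sum c (fm_elim d A) = 1"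
      and c_zero: "\<forall>r<d. (\<Sum>b\<in>fm_elim d A. c b * b r) = 0" by blast
    have "(\<Sum>b\<in>fm_elim d A. c b * b d) = 0"
      by (intro sum.neutral) (simp add: fm_elim_vanishes)
    then have "\<forall>r\<in>{..<Suc d}. (\<Sum>b\<in>fm_elim d A. c b * b r) = 0"
      using c_zero by (auto simp: less_Suc_eq)
    from zero_comb_lift[OF Suc.prems finite_fm_elim[OF Suc.prems] _ c this]
    show ?case using fm_elim_positive_comb[OF Suc.prems] by blast
  qed
qed

subsection \<open>Convex interpolation of slope data\<close>

lemma convex_on_max:
  assumes "convex_on S f" "convex_on S g"
  shows "convex_on S (\<lambda>x. max (f x) (g x))"
proof (rule convex_onI)
  fix t :: real and a b assume t: "0 < t" "t < 1" and ab: "a \<in> S" "b \<in> S"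
  have "f ((1 - t) *\<^sub>R a + t *\<^sub>R b) \<le> (1 - t) * f a + t * f b"
    "g ((1 - t) *\<^sub>R a + t *\<^sub>R b) \<le> (1 - t) * g a + t * g b"
    using t ab assms by (auto intro!: convex_onD)
  moreover have "(1 - t) * f a + t * f b \<le> (1 - t) * max (f a) (g a) + t * max (f b) (g b)"
    "(1 - t) * g a + t * g b \<le> (1 - t) * max (f a) (g a) + t * max (f b) (g b)"
    using t by (intro add_mono mult_left_mono; simp)+
  ultimately show "max (f ((1 - t) *\<^sub>R a + t *\<^sub>R b)) (g ((1 - t) *\<^sub>R a + t *\<^sub>R b))
      \<le> (1 - t) * max (f a) (g a) + t * max (f b) (g b)" by simp
qed (use assms convex_on_imp_convex in blast)

lemma convex_on_affine: "convex_on UNIV (\<lambda>y::real. c + s * (y - z))"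
  by (rule convex_onI) (auto simp: algebra_simps)

lemma top_element:
  fixes x g :: "'i \<Rightarrow> real"
  assumes "finite S" "S \<noteq> {}" and mono: "\<forall>i\<in>S. \<forall>j\<in>S. x i < x j \<longrightarrow> g i \<le> g j"
  obtains k where "k \<in> S" "\<forall>i\<in>S. x i \<le> x k \<and> g i \<le> g k"
proof -
  define T where "T = {i \<in> S. x i = Max (x ` S)}"
  have "Max (x ` S) \<in> x ` S" using assms(1,2) by simp
  then have "finite T" "T \<noteq> {}" using assms(1) by (auto simp: T_def)
  then have "Max (g ` T) \<in> g ` T" by simp
  then obtain k where k: "k \<in> T" "g k = Max (g ` T)" by auto
  have "x i \<le> x k \<and> g i \<le> g k" if i: "i \<in> S" for i
  proof (cases "x i < x k")
    case False
    moreover have "x i \<le> Max (x ` S)" using assms(1) i by simp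
    ultimately have "i \<in> T" using i k(1) by (auto simp: T_def)
    then show ?thesis using k \<open>finite T\<close> False by (auto simp: T_def)
  qed (use mono i k(1) T_def in auto)
  then show thesis using that k(1) T_def by blast
qed

text \<open>Induction step of convex interpolation.\<close>

lemma add_top_supporting_line:
  assumes cvx: "convex_on UNIV \<psi>'" and sub: "\<forall>i\<in>S. \<forall>z. \<psi>' (x i) + g i * (z - x i) \<le> \<psi>' z"
    and slope: "\<forall>z y. z \<le> y \<longrightarrow> \<psi>' y \<le> \<psi>' z + g k * (y - z)"
    and top: "\<forall>i\<in>S. x i \<le> x k"
  shows "\<exists>\<psi>. convex_on UNIV \<psi> \<and> (\<forall>i\<in>insert k S. \<forall>z. \<psi> (x i) + g i * (z - x i) \<le> \<psi> z) \<and>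
    (\<forall>G. g k \<le> G \<longrightarrow> (\<forall>z y. z \<le> y \<longrightarrow> \<psi> y \<le> \<psi> z + G * (y - z)))"
proof (intro exI conjI)
  define L where "L y = \<psi>' (x k) + g k * (y - x k)" for y
  define \<psi> where "\<psi> y = max (\<psi>' y) (L y)" for y
  show "convex_on UNIV \<psi>"
    unfolding \<psi>_def L_def by (rule convex_on_max[OF cvx convex_on_affine])
  show "\<forall>i\<in>insert k S. \<forall>z. \<psi> (x i) + g i * (z - x i) \<le> \<psi> z"
  proof (intro ballI allI)
    fix i z assume i: "i \<in> insert k S"
    show "\<psi> (x i) + g i * (z - x i) \<le> \<psi> z"
    proof (cases "i = k")
      case True
      then show ?thesis by (simp add: \<psi>_def L_def)
    next
      case False
      then have "i \<in> S" using i by simp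
      then have "L (x i) \<le> \<psi>' (x i)"
        using slope[rule_format, of "x i" "x k"] top by (simp add: L_def algebra_simps)
      then have "\<psi> (x i) = \<psi>' (x i)" by (simp add: \<psi>_def)
      moreover have "\<psi>' (x i) + g i * (z - x i) \<le> \<psi>' z" using sub \<open>i \<in> S\<close> by blast
      moreover have "\<psi>' z \<le> \<psi> z" by (simp add: \<psi>_def)
      ultimately show ?thesis by linarith
    qed
  qed
  show "\<forall>G. g k \<le> G \<longrightarrow> (\<forall>z y. z \<le> y \<longrightarrow> \<psi> y \<le> \<psi> z + G * (y - z))"
  proof (intro allI impI)
    fix G z y :: real assume "g k \<le> G" "z \<le> y"
    then have "g k * (y - z) \<le> G * (y - z)" by (simp add: mult_right_mono)
    then have "\<psi>' y \<le> \<psi>' z + G * (y - z)" "L y \<le> L z + G * (y - z)"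
      using slope \<open>z \<le> y\<close> by (force simp: L_def algebra_simps)+
    then show "\<psi> y \<le> \<psi> z + G * (y - z)" unfolding \<psi>_def by linarith
  qed
qed

lemma convex_interpolation:
  fixes x g :: "'i \<Rightarrow> real"
  assumes "finite S" "S \<noteq> {}" and mono: "\<forall>i\<in>S. \<forall>j\<in>S. x i < x j \<longrightarrow> g i \<le> g j"
  shows "\<exists>\<psi>. convex_on UNIV \<psi> \<and> (\<forall>i\<in>S. \<forall>z. \<psi> (x i) + g i * (z - x i) \<le> \<psi> z) \<and>
    (\<forall>G. (\<forall>i\<in>S. g i \<le> G) \<longrightarrow> (\<forall>z y. z \<le> y \<longrightarrow> \<psi> y \<le> \<psi> z + G * (y - z)))"
  using assms
proof (induction S rule: finite_psubset_induct)
  case (psubset S)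
  obtain k where k: "k \<in> S" "\<forall>i\<in>S. x i \<le> x k \<and> g i \<le> g k"
    using top_element[OF psubset.hyps psubset.prems] .
  obtain \<psi>' where "convex_on UNIV \<psi>'" "\<forall>i\<in>S - {k}. \<forall>z. \<psi>' (x i) + g i * (z - x i) \<le> \<psi>' z"
    and "\<forall>z y. z \<le> y \<longrightarrow> \<psi>' y \<le> \<psi>' z + g k * (y - z)"
  proof (cases "S - {k} = {}")
    case True
    show thesis
      by (rule that[of "\<lambda>y. 0 + g k * (y - x k)", OF convex_on_affine])
        (use True in \<open>auto simp: algebra_simps\<close>)
  next
    case False
    have smaller: "S - {k} \<subset> S" using k(1) by blast
    have mono': "\<forall>i\<in>S - {k}. \<forall>j\<in>S - {k}. x i < x j \<longrightarrow> g i \<le> g j"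
      using psubset.prems(2) by blast
    obtain \<psi>' where "convex_on UNIV \<psi>'" "\<forall>i\<in>S - {k}. \<forall>z. \<psi>' (x i) + g i * (z - x i) \<le> \<psi>' z"
      and slope: "\<forall>G. (\<forall>i\<in>S - {k}. g i \<le> G) \<longrightarrow> (\<forall>z y. z \<le> y \<longrightarrow> \<psi>' y \<le> \<psi>' z + G * (y - z))"
      using psubset.IH[OF smaller False mono'] by blast
    moreover have "\<forall>i\<in>S - {k}. g i \<le> g k" using k(2) by blast
    ultimately show thesis using that[of \<psi>'] slope by presburger
  qed
  moreover have "\<forall>i\<in>S - {k}. x i \<le> x k" using k(2) by blast
  ultimately have "\<exists>\<psi>. convex_on UNIV \<psi> \<and>
      (\<forall>i\<in>insert k (S - {k}). \<forall>z. \<psi> (x i) + g i * (z - x i) \<le> \<psi> z) \<and>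
      (\<forall>G. g k \<le> G \<longrightarrow> (\<forall>z y. z \<le> y \<longrightarrow> \<psi> y \<le> \<psi> z + G * (y - z)))"
    by (rule add_top_supporting_line)
  then obtain \<psi> where \<psi>: "convex_on UNIV \<psi>"
      "\<forall>i\<in>insert k (S - {k}). \<forall>z. \<psi> (x i) + g i * (z - x i) \<le> \<psi> z"
    and slope: "\<forall>G. g k \<le> G \<longrightarrow> (\<forall>z y. z \<le> y \<longrightarrow> \<psi> y \<le> \<psi> z + G * (y - z))"
    by blast
  have "insert k (S - {k}) = S" using k(1) by blast
  then show ?case using \<psi> slope k(1) by (intro exI[of _ \<psi>]) auto
qed

lemma strict_convex_add_square:
  assumes "convex S" "convex_on UNIV \<psi>" "0 < \<epsilon>"
  shows "strict_convex_on S (\<lambda>y. \<psi> y + \<epsilon> * y\<^sup>2)"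
  unfolding strict_convex_on_def
proof (intro conjI ballI allI impI)
  fix a b t :: real assume "a \<in> S" "b \<in> S" and abt: "a \<noteq> b \<and> 0 < t \<and> t < 1"
  define m where "m = (1 - t) * a + t * b"
  have "\<psi> m \<le> (1 - t) * \<psi> a + t * \<psi> b"
    using convex_onD[OF assms(2), of t a b] abt by (simp add: m_def)
  moreover have "\<epsilon> * m\<^sup>2 = \<epsilon> * ((1 - t) * a\<^sup>2 + t * b\<^sup>2) - \<epsilon> * (t * (1 - t) * (a - b)\<^sup>2)"
    by (simp add: m_def algebra_simps power2_eq_square)
  moreover have "0 < \<epsilon> * (t * (1 - t) * (a - b)\<^sup>2)" using abt assms(3) by simp
  moreover have "(1 - t) * (\<psi> a + \<epsilon> * a\<^sup>2) + t * (\<psi> b + \<epsilon> * b\<^sup>2)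
      = (1 - t) * \<psi> a + t * \<psi> b + \<epsilon> * ((1 - t) * a\<^sup>2 + t * b\<^sup>2)"
    by (simp add: algebra_simps)
  ultimately show "\<psi> ((1 - t) * a + t * b) + \<epsilon> * ((1 - t) * a + t * b)\<^sup>2
      < (1 - t) * (\<psi> a + \<epsilon> * a\<^sup>2) + t * (\<psi> b + \<epsilon> * b\<^sup>2)"
    unfolding m_def by linarith
qed (rule assms(1))

lemma strict_mono_slack:
  fixes x g :: "'i \<Rightarrow> real"
  assumes "finite S" and mono: "\<forall>i\<in>S. \<forall>j\<in>S. x i < x j \<longrightarrow> g i < g j"
  obtains \<epsilon> where "0 < \<epsilon>" "\<forall>i\<in>S. \<forall>j\<in>S. x i < x j \<longrightarrow> g i - 2 * \<epsilon> * x i \<le> g j - 2 * \<epsilon> * x j"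
proof -
  have "\<forall>\<^sub>F \<epsilon> in at_right 0. 2 * \<epsilon> * (x j - x i) < g j - g i" if "i \<in> S" "j \<in> S" "x i < x j" for i j
  proof (rule order_tendstoD(2))
    show "((\<lambda>\<epsilon>. 2 * \<epsilon> * (x j - x i)) \<longlongrightarrow> 0) (at_right (0::real))"
      by (auto intro!: tendsto_eq_intros)
    show "0 < g j - g i" using mono that by simp
  qed
  then have "\<forall>\<^sub>F \<epsilon> in at_right 0. \<forall>(i, j)\<in>S \<times> S. x i < x j \<longrightarrow> 2 * \<epsilon> * (x j - x i) < g j - g i"
    using assms(1) by (intro eventually_ball_finite) (auto intro: eventually_mono)
  moreover have "\<forall>\<^sub>F \<epsilon> in at_right (0::real). 0 < \<epsilon>" by (simp add: eventually_at_right_less)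
  ultimately obtain \<epsilon> :: real where "0 < \<epsilon>"
    and "\<forall>(i, j)\<in>S \<times> S. x i < x j \<longrightarrow> 2 * \<epsilon> * (x j - x i) < g j - g i"
    using eventually_happens'[OF trivial_limit_at_right_real eventually_conj] by blast
  moreover have "g i - 2 * \<epsilon> * x i \<le> g j - 2 * \<epsilon> * x j"
    if "2 * \<epsilon> * (x j - x i) < g j - g i" for i j
    using that by (simp add: algebra_simps)
  ultimately show thesis using that[of \<epsilon>] by fastforce
qed

text \<open>Strictly convex interpolation of strictly increasing slope data: subtract 2 eps x from the
  slopes, interpolate convexly and add eps y^2 back.\<close>

lemma strictly_convex_interpolation:
  fixes x g :: "'i \<Rightarrow> real"
  assumes "finite S" "S \<noteq> {}" and mono: "\<forall>i\<in>S. \<forall>j\<in>S. x i < x j \<longrightarrow> g i < g j"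
  obtains h where "strict_convex_on {0<..} h" "\<forall>i\<in>S. \<forall>z. h (x i) + g i * (z - x i) \<le> h z"
proof -
  obtain \<epsilon> where \<epsilon>: "0 < \<epsilon>" "\<forall>i\<in>S. \<forall>j\<in>S. x i < x j \<longrightarrow> g i - 2 * \<epsilon> * x i \<le> g j - 2 * \<epsilon> * x j"
    using strict_mono_slack[OF assms(1) mono] by blast
  obtain \<psi> where \<psi>: "convex_on UNIV \<psi>"
    and tangent: "\<forall>i\<in>S. \<forall>z. \<psi> (x i) + (g i - 2 * \<epsilon> * x i) * (z - x i) \<le> \<psi> z"
    using convex_interpolation[OF assms(1,2) \<epsilon>(2)] by blast
  define h where "h y = \<psi> y + \<epsilon> * y\<^sup>2" for y
  have "h (x i) + g i * (z - x i) \<le> h z" if "i \<in> S" for i z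
  proof -
    have "h z - (h (x i) + g i * (z - x i))
        = \<psi> z - (\<psi> (x i) + (g i - 2 * \<epsilon> * x i) * (z - x i)) + \<epsilon> * (z - x i)\<^sup>2"
      by (simp add: h_def algebra_simps power2_eq_square)
    moreover have "0 \<le> \<epsilon> * (z - x i)\<^sup>2" using \<epsilon>(1) by simp
    moreover have "\<psi> (x i) + (g i - 2 * \<epsilon> * x i) * (z - x i) \<le> \<psi> z" using tangent that by blast
    ultimately show ?thesis by linarith
  qed
  moreover have "strict_convex_on {0<..} h"
    unfolding h_def by (rule strict_convex_add_square[OF _ \<psi> \<epsilon>(1)]) simp
  ultimately show thesis using that by blast
qed

lemma strict_convex_onD:
  assumes "strict_convex_on S f" "x \<in> S" "y \<in> S" "x \<noteq> y" "0 < t" "t < 1"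
  shows "f ((1 - t) * x + t * y) < (1 - t) * f x + t * f y"
  using assms by (simp add: strict_convex_on_def)

lemma strict_convex_imp_convex_on:
  assumes "strict_convex_on S h"
  shows "convex_on S h"
proof (rule convex_onI)
  show "convex S" using assms by (simp add: strict_convex_on_def)
  fix t :: real and x y assume "0 < t" "t < 1" "x \<in> S" "y \<in> S"
  then show "h ((1 - t) *\<^sub>R x + t *\<^sub>R y) \<le> (1 - t) * h x + t * h y"
    using strict_convex_onD[OF assms, of x y t] by (cases "x = y") (auto simp: algebra_simps)
qed

text \<open>The derivative of a differentiable strictly convex function on (0, oo) is strictly
  increasing: compare the tangents at a and b at the midpoint.\<close>

lemma deriv_strict_mono:
  assumes sc: "strict_convex_on {0<..} h" and dif: "\<forall>x>0. h differentiable (at x)"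
    and ab: "0 < a" "a < b"
  shows "deriv h a < deriv h b"
proof -
  define c where "c = (a + b) / 2"
  have tangent: "deriv h z * (c - z) \<le> h c - h z" if "0 < z" for z
  proof (rule convex_on_imp_above_tangent[OF strict_convex_imp_convex_on[OF sc]])
    show "connected {0::real<..}" by (simp add: convex_connected)
    show "z \<in> interior {0<..}" "c \<in> {0<..}" using that ab by (auto simp: interior_open c_def)
    show "(h has_field_derivative deriv h z) (at z within {0<..})"
      using dif that by (auto intro: has_field_derivative_at_within simp: DERIV_deriv_iff_real_differentiable)
  qed
  have "h ((1 - 1/2) * a + 1/2 * b) < (1 - 1/2) * h a + 1/2 * h b"
    using ab by (intro strict_convex_onD[OF sc]) auto
  then have "2 * h c < h a + h b" by (simp add: c_def field_simps)
  moreover have "deriv h a * ((b - a) / 2) \<le> h c - h a" "- (deriv h b * ((b - a) / 2)) \<le> h c - h b"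
    using tangent[of a] tangent[of b] ab by (simp_all add: c_def field_simps)
  ultimately have "deriv h a * ((b - a) / 2) < deriv h b * ((b - a) / 2)" by linarith
  then show ?thesis using ab by (simp add: mult_less_cancel_right)
qed

lemma no_feasible_descent:
  fixes \<phi> :: "real \<Rightarrow> real"
  assumes "(\<phi> has_real_derivative D) (at 0)" "D < 0"
    and feasible: "\<forall>\<^sub>F t in at_right 0. t \<in> T" and minimal: "\<forall>t\<in>T. \<phi> 0 \<le> \<phi> t"
  shows False
proof -
  obtain d where "0 < d" and descent: "\<forall>t>0. t < d \<longrightarrow> \<phi> (0 + t) < \<phi> 0"
    using DERIV_neg_dec_right[OF assms(1,2)] by blast
  have "\<forall>\<^sub>F t in at_right 0. t \<in> {0<..<d} \<and> t \<in> T"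
    using eventually_at_right_real[OF \<open>0 < d\<close>] feasible by (rule eventually_conj)
  then obtain t where "t \<in> {0<..<d}" "t \<in> T"
    using eventually_happens'[OF trivial_limit_at_right_real] by blast
  then show False using descent minimal by fastforce
qed

lemma translate_cond_manifold:
  assumes "P0 \<in> cond_manifold n k m M"
  shows "(\<lambda>l. P0 l + q l) \<in> cond_manifold n k m M \<longleftrightarrow>
         (\<forall>l\<ge>n. q l = 0) \<and> (\<forall>r\<le>k. (\<Sum>j<n. m r j * q j) = 0)"
  using assms by (simp add: cond_manifold_def distrib_left sum.distrib)

lemma sum_gamma:
  assumes "j \<noteq> i" "i < n" "j < n"
  shows "(\<Sum>l<n. f l * gamma j i l) = f i - f j"
proof -
  have "(\<Sum>l<n. f l * gamma j i l) = (\<Sum>l<n. (if l = i then f l else 0) - (if l = j then f l else 0))"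
    unfolding gamma_def using assms(1) by (intro sum.cong) auto
  also have "\<dots> = f i - f j" using assms by (simp add: sum_subtractf)
  finally show ?thesis .
qed

lemma gamma_in_Q_gens:
  assumes "i < n" "j < n" and ratio: "P0 i / Pstar i < P0 j / Pstar j"
  shows "gamma j i \<in> Q_gens n P0 Pstar"
proof (cases "j < i")
  case True
  then show ?thesis using assms unfolding Q_gens_def by force
next
  case False
  then have "i < j" using ratio by (cases "i = j") auto
  moreover have "gamma j i = (\<lambda>l. sgn (P0 i / Pstar i - P0 j / Pstar j) * gamma i j l)"
    using ratio \<open>i < j\<close> by (auto simp: gamma_def fun_eq_iff)
  ultimately show ?thesis using assms unfolding Q_gens_def by blast
qed

lemma nonneg_cone_sum:
  assumes "finite I" "\<forall>i\<in>I. v i \<in> S \<and> 0 \<le> c i"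
  shows "(\<lambda>l. \<Sum>i\<in>I. c i * v i l) \<in> nonneg_cone S"
proof -
  define c' where "c' w = (\<Sum>i\<in>{i \<in> I. v i = w}. c i)" for w
  have "(\<Sum>i\<in>I. c i * v i l) = (\<Sum>w\<in>v ` I. c' w * w l)" for l
    unfolding c'_def sum_distrib_right
    by (subst sum.image_gen[OF assms(1), of _ v]) (intro sum.cong refl; simp)
  moreover have "\<forall>w\<in>v ` I. 0 \<le> c' w" using assms(2) by (auto simp: c'_def intro!: sum_nonneg)
  ultimately show ?thesis
    using assms unfolding nonneg_cone_def by (intro CollectI exI[of _ "v ` I"] exI[of _ c']) auto
qed

subsection \<open>Sufficiency of the cone condition\<close>

text \<open>Transfers of mass: for an index set I, transfer i moves weight c i from coordinate dst i to
  coordinate src i.  Pairing the total transfer with f records the increments of f.\<close>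

lemma transfer_pairing:
  assumes "\<forall>i\<in>I. src i < n \<and> dst i < n \<and> src i \<noteq> dst i"
  shows "(\<Sum>l<n. f l * (\<Sum>i\<in>I. c i * gamma (dst i) (src i) l)) = (\<Sum>i\<in>I. c i * (f (src i) - f (dst i)))"
proof -
  have "(\<Sum>l<n. f l * (\<Sum>i\<in>I. c i * gamma (dst i) (src i) l))
      = (\<Sum>i\<in>I. c i * (\<Sum>l<n. f l * gamma (dst i) (src i) l))"
    by (simp add: sum_distrib_left sum.swap[of _ I] mult.left_commute)
  also have "\<dots> = (\<Sum>i\<in>I. c i * (f (src i) - f (dst i)))"
  proof (intro sum.cong refl)
    fix i assume "i \<in> I"
    then have "dst i \<noteq> src i" "src i < n" "dst i < n" using assms by auto
    then show "c i * (\<Sum>l<n. f l * gamma (dst i) (src i) l) = c i * (f (src i) - f (dst i))"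
      by (simp add: sum_gamma)
  qed
  finally show ?thesis .
qed

lemma transfer_in_Qcone:
  assumes "finite I"
    and "\<forall>i\<in>I. src i < n \<and> dst i < n \<and> P0 (src i) / Pstar (src i) < P0 (dst i) / Pstar (dst i) \<and> 0 \<le> c i"
  shows "(\<lambda>l. \<Sum>i\<in>I. c i * gamma (dst i) (src i) l) \<in> Qcone n P0 Pstar"
  unfolding Qcone_def using assms by (intro nonneg_cone_sum) (auto intro: gamma_in_Q_gens)

text \<open>Under the cone condition, no convex combination of transfers towards smaller ratios is
  compatible with the constraints: it would be a nonzero cone direction staying in L (nonzero
  because pairing it with the ratios themselves is negative).\<close>

lemma Q_condition_no_zero_comb:
  assumes P0: "P0 \<in> cond_manifold n k m M"
    and hyp: "(\<lambda>q. (\<lambda>l. P0 l + q l)) ` Qcone n P0 Pstar \<inter> cond_manifold n k m M = {P0}"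
    and I: "finite I"
      "\<forall>i\<in>I. src i < n \<and> dst i < n \<and> P0 (src i) / Pstar (src i) < P0 (dst i) / Pstar (dst i) \<and> 0 \<le> c i"
    and c1: "sum c I = 1"
  shows "\<exists>r\<le>k. (\<Sum>i\<in>I. c i * (m r (src i) - m r (dst i))) \<noteq> 0"
proof (rule ccontr)
  assume "\<not> ?thesis"
  then have rows: "\<forall>r\<le>k. (\<Sum>i\<in>I. c i * (m r (src i) - m r (dst i))) = 0" by auto
  define q where "q = (\<lambda>l. \<Sum>i\<in>I. c i * gamma (dst i) (src i) l)"
  have distinct: "\<forall>i\<in>I. src i < n \<and> dst i < n \<and> src i \<noteq> dst i" using I(2) by fastforce
  have "q \<in> Qcone n P0 Pstar" unfolding q_def by (rule transfer_in_Qcone[OF I])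
  moreover have "(\<lambda>l. P0 l + q l) \<in> cond_manifold n k m M"
    unfolding translate_cond_manifold[OF P0]
  proof (intro conjI allI impI)
    fix l assume "n \<le> l"
    then have "gamma (dst i) (src i) l = 0" if "i \<in> I" for i
      using distinct that by (auto simp: gamma_def)
    then show "q l = 0" by (simp add: q_def)
  next
    fix r assume "r \<le> k"
    then show "(\<Sum>j<n. m r j * q j) = 0"
      using transfer_pairing[OF distinct, of "m r" c] rows unfolding q_def by simp
  qed
  ultimately have "(\<lambda>l. P0 l + q l) \<in> {P0}" using hyp by blast
  then have "(\<Sum>l<n. (P0 l / Pstar l) * q l) = 0" by (simp add: fun_eq_iff)
  moreover have "(\<Sum>i\<in>I. c i * (P0 (src i) / Pstar (src i) - P0 (dst i) / Pstar (dst i))) < 0"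
    using I c1 by (intro convex_comb_neg) auto
  ultimately show False
    using transfer_pairing[OF distinct, of "\<lambda>l. P0 l / Pstar l" c] unfolding q_def by simp
qed

text \<open>Key step of the sufficiency direction: by Gordan's theorem, applied to the column
  differences m(., i) - m(., j) over pairs with x i < x j, there is a multiplier vector y whose
  row combination g i = sum_r y r * m r i is strictly increasing in the ratio x i = P0 i / Pstar i.\<close>

lemma Q_condition_imp_multiplier:
  assumes P0: "P0 \<in> cond_manifold n k m M"
    and hyp: "(\<lambda>q. (\<lambda>l. P0 l + q l)) ` Qcone n P0 Pstar \<inter> cond_manifold n k m M = {P0}"
  obtains y where "\<forall>i<n. \<forall>j<n. P0 i / Pstar i < P0 j / Pstar j \<longrightarrow>
                     (\<Sum>r\<le>k. y r * m r i) < (\<Sum>r\<le>k. y r * m r j)"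
proof -
  define x where "x l = P0 l / Pstar l" for l
  define E where "E = {e. fst e < n \<and> snd e < n \<and> x (fst e) < x (snd e)}"
  define vec where "vec e = (\<lambda>r. m r (fst e) - m r (snd e))" for e :: "nat \<times> nat"
  define A where "A = vec ` E"
  have "finite E" unfolding E_def by (rule finite_subset[of _ "{..<n} \<times> {..<n}"]) auto
  then have "finite A" by (simp add: A_def)
  have "\<not> (\<exists>c. (\<forall>a\<in>A. 0 \<le> c a) \<and> sum c A = 1 \<and> (\<forall>r<Suc k. (\<Sum>a\<in>A. c a * a r) = 0))"
  proof
    assume "\<exists>c. (\<forall>a\<in>A. 0 \<le> c a) \<and> sum c A = 1 \<and> (\<forall>r<Suc k. (\<Sum>a\<in>A. c a * a r) = 0)"
    then obtain c where c: "\<forall>a\<in>A. 0 \<le> c a" "sum c A = 1" "\<forall>r<Suc k. (\<Sum>a\<in>A. c a * a r) = 0"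
      by blast
    define rep where "rep = inv_into E vec"
    have rep: "rep a \<in> E" "vec (rep a) = a" if "a \<in> A" for a
      using that by (simp_all add: rep_def A_def inv_into_into f_inv_into_f)
    have "\<forall>a\<in>A. fst (rep a) < n \<and> snd (rep a) < n \<and>
        P0 (fst (rep a)) / Pstar (fst (rep a)) < P0 (snd (rep a)) / Pstar (snd (rep a)) \<and> 0 \<le> c a"
      using rep(1) c(1) by (auto simp: E_def x_def)
    from Q_condition_no_zero_comb[OF P0 hyp \<open>finite A\<close> this c(2)]
    obtain r where "r \<le> k" "(\<Sum>a\<in>A. c a * (m r (fst (rep a)) - m r (snd (rep a)))) \<noteq> 0"
      by blast
    moreover have "(\<Sum>a\<in>A. c a * (m r (fst (rep a)) - m r (snd (rep a)))) = (\<Sum>a\<in>A. c a * a r)"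
      using rep(2) by (intro sum.cong refl) (metis vec_def)
    ultimately show False using c(3) by simp
  qed
  then obtain y where y: "\<forall>a\<in>A. (\<Sum>r<Suc k. a r * y r) < 0"
    using gordan_alternative[OF \<open>finite A\<close>, of "Suc k"] by blast
  have "(\<Sum>r\<le>k. y r * m r i) < (\<Sum>r\<le>k. y r * m r j)" if "i < n" "j < n" "x i < x j" for i j
  proof -
    have "vec (i, j) \<in> A" using that by (auto simp: A_def E_def)
    with y have "(\<Sum>r<Suc k. vec (i, j) r * y r) < 0" by blast
    then have "(\<Sum>r<Suc k. (m r i - m r j) * y r) < 0" by (simp add: vec_def)
    then show ?thesis by (simp add: lessThan_Suc_atMost algebra_simps sum_subtractf)
  qed
  then show thesis using that[of y] by (simp add: x_def)
qed

lemma fdiv_supporting_bound: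
  assumes Pstar: "\<forall>i<n. 0 < Pstar i"
    and tangent: "\<forall>i<n. \<forall>z. h (P0 i / Pstar i) + g i * (z - P0 i / Pstar i) \<le> h z"
  shows "fdiv n h P0 Pstar + (\<Sum>i<n. g i * (P i - P0 i)) \<le> fdiv n h P Pstar"
proof -
  have "Pstar i * h (P0 i / Pstar i) + g i * (P i - P0 i) \<le> Pstar i * h (P i / Pstar i)" if "i < n" for i
  proof -
    have "Pstar i * (h (P0 i / Pstar i) + g i * (P i / Pstar i - P0 i / Pstar i))
        \<le> Pstar i * h (P i / Pstar i)"
      using tangent Pstar that by (simp add: mult_left_mono less_imp_le)
    moreover have "Pstar i * (g i * (P i / Pstar i - P0 i / Pstar i)) = g i * (P i - P0 i)"
    proof -
      have "0 < Pstar i" using Pstar that by simp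
      then show ?thesis by (simp add: field_simps)
    qed
    ultimately show ?thesis by (simp add: distrib_left)
  qed
  then show ?thesis unfolding fdiv_def sum.distrib[symmetric] by (intro sum_mono) auto
qed

lemma multiplier_orthogonal:
  assumes "P \<in> cond_manifold n k m M" "P0 \<in> cond_manifold n k m M"
  shows "(\<Sum>i<n. (\<Sum>r\<le>k. y r * m r i) * (P i - P0 i)) = 0"
proof -
  have "(\<Sum>i<n. (\<Sum>r\<le>k. y r * m r i) * (P i - P0 i))
      = (\<Sum>r\<le>k. y r * ((\<Sum>i<n. m r i * P i) - (\<Sum>i<n. m r i * P0 i)))"
    by (simp add: sum_distrib_left sum_distrib_right sum.swap[of _ "{..<n}"] sum_subtractf
        algebra_simps)
  also have "\<dots> = 0" using assms by (simp add: cond_manifold_def)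
  finally show ?thesis .
qed

lemma Q_condition_imp_minimizer:
  assumes n: "n \<noteq> 0" and Pstar: "Pstar \<in> pos_simplex n"
    and P0: "P0 \<in> cond_manifold n k m M"
    and hyp: "(\<lambda>q. (\<lambda>l. P0 l + q l)) ` Qcone n P0 Pstar \<inter> cond_manifold n k m M = {P0}"
  obtains h where "strict_convex_on {0<..} h"
    "\<forall>P \<in> cond_manifold n k m M. fdiv n h P0 Pstar \<le> fdiv n h P Pstar"
proof -
  obtain y where y: "\<forall>i<n. \<forall>j<n. P0 i / Pstar i < P0 j / Pstar j \<longrightarrow>
                     (\<Sum>r\<le>k. y r * m r i) < (\<Sum>r\<le>k. y r * m r j)"
    using Q_condition_imp_multiplier[OF P0 hyp] by blast
  obtain h where h: "strict_convex_on {0<..} h"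
    and tangent: "\<forall>i\<in>{..<n}. \<forall>z. h (P0 i / Pstar i) + (\<Sum>r\<le>k. y r * m r i) * (z - P0 i / Pstar i) \<le> h z"
    using strictly_convex_interpolation[of "{..<n}" "\<lambda>i. P0 i / Pstar i" "\<lambda>i. \<Sum>r\<le>k. y r * m r i"] y n
    by auto
  have "fdiv n h P0 Pstar \<le> fdiv n h P Pstar" if "P \<in> cond_manifold n k m M" for P
    using fdiv_supporting_bound[of n Pstar h P0 "\<lambda>i. \<Sum>r\<le>k. y r * m r i" P] tangent Pstar
      multiplier_orthogonal[OF that P0] by (simp add: pos_simplex_def)
  then show thesis using that h by blast
qed

subsection \<open>Necessity of the cone condition\<close>

lemma Q_gens_descent:
  assumes D: "\<forall>i<n. \<forall>j<n. P0 i / Pstar i < P0 j / Pstar j \<longrightarrow> D i < D j"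
    and v: "v \<in> Q_gens n P0 Pstar"
  shows "(\<Sum>l<n. v l * D l) \<le> 0" and "v \<noteq> (\<lambda>l. 0) \<Longrightarrow> (\<Sum>l<n. v l * D l) < 0"
proof -
  define x where "x l = P0 l / Pstar l" for l
  obtain j i where ji: "j < i" "i < n" and v_eq: "v = (\<lambda>l. sgn (x j - x i) * gamma j i l)"
    using v unfolding Q_gens_def x_def by blast
  have "(\<Sum>l<n. v l * D l) = sgn (x j - x i) * (\<Sum>l<n. D l * gamma j i l)"
    unfolding v_eq by (simp add: sum_distrib_left algebra_simps)
  also have "\<dots> = sgn (x j - x i) * (D i - D j)" using ji by (simp add: sum_gamma)
  finally have S: "(\<Sum>l<n. v l * D l) = sgn (x j - x i) * (D i - D j)" .
  have "x i < x j \<Longrightarrow> D i < D j" "x j < x i \<Longrightarrow> D j < D i"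
    using D ji by (auto simp: x_def)
  then have "sgn (x j - x i) * (D i - D j) < 0" if "x i \<noteq> x j"
    using that by (cases "x i < x j") (auto simp: mult_less_0_iff)
  moreover have "v = (\<lambda>l. 0)" if "x i = x j" using that by (simp add: v_eq)
  ultimately show "(\<Sum>l<n. v l * D l) \<le> 0" "v \<noteq> (\<lambda>l. 0) \<Longrightarrow> (\<Sum>l<n. v l * D l) < 0"
    unfolding S by (cases "x i = x j"; force)+
qed

lemma Qcone_descent:
  assumes D: "\<forall>i<n. \<forall>j<n. P0 i / Pstar i < P0 j / Pstar j \<longrightarrow> D i < D j"
    and q: "q \<in> Qcone n P0 Pstar" "q \<noteq> (\<lambda>l. 0)"
  shows "(\<Sum>l<n. q l * D l) < 0"
proof -
  obtain F c where F: "finite F" "F \<subseteq> Q_gens n P0 Pstar" "\<forall>v\<in>F. 0 \<le> c v"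
    and q_eq: "q = (\<lambda>l. \<Sum>v\<in>F. c v * v l)"
    using q(1) unfolding Qcone_def nonneg_cone_def by blast
  obtain l0 where "q l0 \<noteq> 0" using q(2) by (auto simp: fun_eq_iff)
  then obtain v0 where v0: "v0 \<in> F" "c v0 * v0 l0 \<noteq> 0"
    unfolding q_eq by (meson sum.neutral)
  have "(\<Sum>l<n. q l * D l) = (\<Sum>v\<in>F. c v * (\<Sum>l<n. v l * D l))"
    unfolding q_eq by (simp add: sum_distrib_left sum_distrib_right sum.swap[of _ F] mult.assoc)
  also have "\<dots> < (\<Sum>v\<in>F. 0)"
  proof (rule sum_strict_mono_ex1[OF F(1)])
    show "\<forall>v\<in>F. c v * (\<Sum>l<n. v l * D l) \<le> 0"
      using F(2,3) Q_gens_descent(1)[OF D] by (meson mult_nonneg_nonpos subsetD)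
    have "0 < c v0" "v0 \<noteq> (\<lambda>l. 0)" using v0 F(3) by (auto simp: order_le_less)
    then show "\<exists>v\<in>F. c v * (\<Sum>l<n. v l * D l) < 0"
      using v0(1) F(2) Q_gens_descent(2)[OF D] by (meson mult_pos_neg subsetD)
  qed
  finally show ?thesis by simp
qed

lemma fdiv_line_derivative:
  assumes Pstar: "\<forall>l<n. 0 < Pstar l" and dif: "\<forall>l<n. h differentiable (at (P0 l / Pstar l))"
  shows "((\<lambda>t. fdiv n h (\<lambda>l. P0 l + t * q l) Pstar) has_real_derivative
           (\<Sum>l<n. q l * deriv h (P0 l / Pstar l))) (at 0)"
proof -
  have "((\<lambda>t. Pstar l * h ((P0 l + t * q l) / Pstar l)) has_real_derivative
          q l * deriv h (P0 l / Pstar l)) (at 0)" if "l < n" for l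
  proof -
    have "0 < Pstar l" using Pstar that by simp
    have "(h has_real_derivative deriv h (P0 l / Pstar l)) (at ((P0 l + 0 * q l) / Pstar l))"
      using dif that by (simp add: DERIV_deriv_iff_real_differentiable)
    moreover have "((\<lambda>t. (P0 l + t * q l) / Pstar l) has_real_derivative q l / Pstar l) (at 0)"
      using \<open>0 < Pstar l\<close> by (auto intro!: derivative_eq_intros)
    ultimately have "((\<lambda>t. h ((P0 l + t * q l) / Pstar l)) has_real_derivative
            deriv h (P0 l / Pstar l) * (q l / Pstar l)) (at 0)"
      by (rule DERIV_chain2[where g = "\<lambda>t. (P0 l + t * q l) / Pstar l" and x = 0])
    from DERIV_cmult[OF this, of "Pstar l"] show ?thesis
      using \<open>0 < Pstar l\<close> by (simp add: field_simps)
  qed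
  then show ?thesis unfolding fdiv_def by (auto intro: DERIV_sum)
qed

text \<open>If P0 is a positive point of L and P0 + q lies in L, then small steps from P0 towards
  P0 + q remain in L and in the open simplex (row 0 of the matrix preserves total mass).\<close>

lemma feasible_segment:
  assumes m0: "\<forall>j. m 0 j = 1" and P0: "P0 \<in> cond_manifold n k m M \<inter> pos_simplex n"
    and q: "(\<lambda>l. P0 l + q l) \<in> cond_manifold n k m M"
  shows "\<forall>\<^sub>F t in at_right 0. (\<lambda>l. P0 l + t * q l) \<in> cond_manifold n k m M \<inter> pos_simplex n"
proof -
  have P0L: "P0 \<in> cond_manifold n k m M" using P0 by simp
  have q_out: "\<forall>l\<ge>n. q l = 0" and q_rows: "\<forall>r\<le>k. (\<Sum>j<n. m r j * q j) = 0"
    using q unfolding translate_cond_manifold[OF P0L] by auto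
  have on_L: "(\<lambda>l. P0 l + t * q l) \<in> cond_manifold n k m M" for t
    unfolding translate_cond_manifold[OF P0L]
    using q_out q_rows by (simp add: mult.left_commute[of _ t] flip: sum_distrib_left)
  have mass: "(\<Sum>j<n. P0 j + t * q j) = 1" for t
  proof -
    have "(\<Sum>j<n. m 0 j * q j) = 0" using q_rows by simp
    then have "(\<Sum>j<n. q j) = 0" using m0 by simp
    then show ?thesis using P0 by (simp add: pos_simplex_def sum.distrib flip: sum_distrib_left)
  qed
  have "\<forall>\<^sub>F t in at_right 0. 0 < P0 l + t * q l" if "l < n" for l
  proof (rule order_tendstoD(1))
    show "((\<lambda>t. P0 l + t * q l) \<longlongrightarrow> P0 l) (at_right 0)"
      by (auto intro!: tendsto_eq_intros)
    show "0 < P0 l" using P0 that by (simp add: pos_simplex_def)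
  qed
  then have "\<forall>\<^sub>F t in at_right 0. \<forall>l\<in>{..<n}. 0 < P0 l + t * q l"
    by (intro eventually_ball_finite) auto
  then show ?thesis
  proof (rule eventually_mono)
    fix t assume "\<forall>l\<in>{..<n}. 0 < P0 l + t * q l"
    moreover have "\<forall>l\<ge>n. P0 l + t * q l = 0" using on_L[of t] by (simp add: cond_manifold_def)
    ultimately show "(\<lambda>l. P0 l + t * q l) \<in> cond_manifold n k m M \<inter> pos_simplex n"
      using on_L[of t] mass[of t] by (simp add: pos_simplex_def)
  qed
qed

text \<open>Necessity: at a minimizer, a nonzero cone direction q with P0 + q in L would be a feasible
  direction of strict descent, since the derivative of h is strictly increasing.\<close>

lemma minimizer_imp_Q_condition:
  assumes m0: "\<forall>j. m 0 j = 1" and Pstar: "Pstar \<in> pos_simplex n"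
    and P0: "P0 \<in> cond_manifold n k m M \<inter> pos_simplex n"
    and sc: "strict_convex_on {0<..} h" and dif: "\<forall>x>0. h differentiable (at x)"
    and minim: "\<forall>P \<in> cond_manifold n k m M \<inter> pos_simplex n. fdiv n h P0 Pstar \<le> fdiv n h P Pstar"
  shows "(\<lambda>q. (\<lambda>l. P0 l + q l)) ` Qcone n P0 Pstar \<inter> cond_manifold n k m M = {P0}"
proof
  have "(\<lambda>l. 0) \<in> Qcone n P0 Pstar"
    unfolding Qcone_def nonneg_cone_def by (intro CollectI exI[of _ "{}"]) auto
  then show "{P0} \<subseteq> (\<lambda>q. (\<lambda>l. P0 l + q l)) ` Qcone n P0 Pstar \<inter> cond_manifold n k m M"
    using P0 by (auto intro: rev_image_eqI[of "\<lambda>l. 0"])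
next
  have Pstar_pos: "\<forall>l<n. 0 < Pstar l" and P0_pos: "\<forall>l<n. 0 < P0 l"
    using Pstar P0 by (auto simp: pos_simplex_def)
  define D where "D l = deriv h (P0 l / Pstar l)" for l
  have D_mono: "\<forall>i<n. \<forall>j<n. P0 i / Pstar i < P0 j / Pstar j \<longrightarrow> D i < D j"
    using Pstar_pos P0_pos by (auto simp: D_def intro!: deriv_strict_mono[OF sc dif])
  show "(\<lambda>q. (\<lambda>l. P0 l + q l)) ` Qcone n P0 Pstar \<inter> cond_manifold n k m M \<subseteq> {P0}"
  proof
    fix z assume "z \<in> (\<lambda>q. (\<lambda>l. P0 l + q l)) ` Qcone n P0 Pstar \<inter> cond_manifold n k m M"
    then obtain q where q: "q \<in> Qcone n P0 Pstar" "(\<lambda>l. P0 l + q l) \<in> cond_manifold n k m M"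
      and z: "z = (\<lambda>l. P0 l + q l)" by blast
    have "q = (\<lambda>l. 0)"
    proof (rule ccontr)
      assume "q \<noteq> (\<lambda>l. 0)"
      have "((\<lambda>t. fdiv n h (\<lambda>l. P0 l + t * q l) Pstar) has_real_derivative (\<Sum>l<n. q l * D l)) (at 0)"
        unfolding D_def using Pstar_pos P0_pos dif
        by (intro fdiv_line_derivative) (auto intro: divide_pos_pos)
      moreover have "(\<Sum>l<n. q l * D l) < 0"
        using Qcone_descent[OF D_mono q(1) \<open>q \<noteq> (\<lambda>l. 0)\<close>] .
      moreover have "\<forall>\<^sub>F t in at_right 0. t \<in> {t. (\<lambda>l. P0 l + t * q l) \<in> cond_manifold n k m M \<inter> pos_simplex n}"
        using feasible_segment[OF m0 P0 q(2)] by simp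
      moreover have "\<forall>t\<in>{t. (\<lambda>l. P0 l + t * q l) \<in> cond_manifold n k m M \<inter> pos_simplex n}.
          fdiv n h (\<lambda>l. P0 l + 0 * q l) Pstar \<le> fdiv n h (\<lambda>l. P0 l + t * q l) Pstar"
        using minim by simp
      ultimately show False by (rule no_feasible_descent)
    qed
    then show "z \<in> {P0}" using z by simp
  qed
qed

theorem mainTheorem4:
  fixes n k :: nat and Pstar :: "nat \<Rightarrow> real"
    and m :: "nat \<Rightarrow> nat \<Rightarrow> real" and M :: "nat \<Rightarrow> real"
  assumes n2: "n \<ge> 2"
    and Pstar: "Pstar \<in> pos_simplex n"
    and m0: "\<forall>j. m 0 j = 1"
    and M0: "M 0 = 1"
    and Lne: "cond_manifold n k m M \<inter> pos_simplex n \<noteq> {}"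
  shows
    "(\<forall>P0 \<in> cond_manifold n k m M \<inter> pos_simplex n.
        (\<lambda>q. (\<lambda>l. P0 l + q l)) ` Qcone n P0 Pstar \<inter> cond_manifold n k m M = {P0} \<longrightarrow>
        (\<exists>h. strict_convex_on {0<..} h \<and>
             (\<forall>P \<in> cond_manifold n k m M \<inter> pos_simplex n. fdiv n h P0 Pstar \<le> fdiv n h P Pstar)))
   \<and>
    (\<forall>P0 \<in> cond_manifold n k m M \<inter> pos_simplex n. \<forall>h.
        strict_convex_on {0<..} h \<and> (\<forall>x>0. h differentiable (at x)) \<and>
        (\<forall>P \<in> cond_manifold n k m M \<inter> pos_simplex n. fdiv n h P0 Pstar \<le> fdiv n h P Pstar) \<longrightarrow>
        (\<lambda>q. (\<lambda>l. P0 l + q l)) ` Qcone n P0 Pstar \<inter> cond_manifold n k m M = {P0})"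
proof (intro conjI ballI allI impI)
  fix P0 assume P0: "P0 \<in> cond_manifold n k m M \<inter> pos_simplex n"
    and cone: "(\<lambda>q. (\<lambda>l. P0 l + q l)) ` Qcone n P0 Pstar \<inter> cond_manifold n k m M = {P0}"
  have "n \<noteq> 0" and "P0 \<in> cond_manifold n k m M" using n2 P0 by auto
  then obtain h where "strict_convex_on {0<..} h"
    and "\<forall>P \<in> cond_manifold n k m M. fdiv n h P0 Pstar \<le> fdiv n h P Pstar"
    by (rule Q_condition_imp_minimizer[OF _ Pstar _ cone])
  then show "\<exists>h. strict_convex_on {0<..} h \<and>
          (\<forall>P \<in> cond_manifold n k m M \<inter> pos_simplex n. fdiv n h P0 Pstar \<le> fdiv n h P Pstar)"
    by blast
next
  fix P0 h assume P0: "P0 \<in> cond_manifold n k m M \<inter> pos_simplex n"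
    and "strict_convex_on {0<..} h \<and> (\<forall>x>0. h differentiable (at x)) \<and>
        (\<forall>P \<in> cond_manifold n k m M \<inter> pos_simplex n. fdiv n h P0 Pstar \<le> fdiv n h P Pstar)"
  then show "(\<lambda>q. (\<lambda>l. P0 l + q l)) ` Qcone n P0 Pstar \<inter> cond_manifold n k m M = {P0}"
    using minimizer_imp_Q_condition[where m = m and k = k and M = M, OF m0 Pstar P0] by blast
qed

end
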